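(* Let $n\geq 4$ be an integer and let $k\in\{2,3,\dots,\lfloor n/2\rfloor\}$. Then $$n\frac{\sin(\pi k/n)}{\sin(\pi/n)}>k(n-k)+1.$$ *)

theory Defs
  imports Complex_Main
begin

end

theory Submission
  imports Defs "HOL-Analysis.Convex"
begin

text \<open>Let \<open>E(j) = n sin(j\<pi>/n) - (j(n-j)+1) sin(\<pi>/n)\<close>. Then \<open>E(1) = 0\<close>, and \<open>E\<close> is strictly
  increasing on \<open>1 \<le> j \<le> n/2\<close>: by the sum-to-product formula, with \<open>h = \<pi>/(2n)\<close>,
  \<open>E(j+1) - E(j) = 2 sin h (n cos((2j+1)h) - (n-2j-1) cos h)\<close>, and concavity of \<open>cos\<close> on
  \<open>[0, \<pi>/2]\<close> gives \<open>n cos((2j+1)h) \<ge> n-2j-1 > (n-2j-1) cos h\<close>.\<close>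

lemma concave_on_cos: "concave_on {-(pi/2)..pi/2} cos"
proof (rule f''_le0_imp_concave[where f' = "\<lambda>x. - sin x" and f'' = "\<lambda>x. - cos x"])
  show "\<And>x. x \<in> {-(pi/2)..pi/2} \<Longrightarrow> - cos x \<le> 0"
    by (auto intro!: cos_ge_zero)
qed (auto intro!: derivative_eq_intros)

lemma cos_ge_one_minus:
  fixes t :: real
  assumes "0 \<le> t" "t \<le> 1"
  shows "1 - t \<le> cos (t * pi / 2)"
proof -
  have "(1 - t) * cos 0 + t * cos (pi/2) \<le> cos ((1 - t) *\<^sub>R 0 + t *\<^sub>R (pi/2))"
    by (rule concave_onD[OF concave_on_cos]) (use assms in auto)
  then show ?thesis
    by (simp add: mult.commute)
qed

lemma sin_multiple_increment_gt:
  fixes n j :: nat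
  assumes "2 * j + 1 < n"
  shows "(real n - 2 * real j - 1) * sin (pi / real n)
           < real n * (sin (real (Suc j) * pi / real n) - sin (real j * pi / real n))"
proof -
  define h where "h = pi / (2 * real n)"
  define t where "t = (2 * real j + 1) / real n"
  have n_pos: "real n > 0"
    using assms by simp
  have "0 < h" "h < pi"
    using assms by (auto simp: h_def field_simps)
  then have sin_h_pos: "sin h > 0" and cos_h_lt_1: "cos h < 1"
    using sin_gt_zero cos_mono_less_eq[of h 0] by auto
  have increment: "sin (real (Suc j) * pi / real n) - sin (real j * pi / real n)
                     = 2 * sin h * cos (t * pi / 2)"
  proof -
    have half_diff: "(real (Suc j) * pi / real n - real j * pi / real n) / 2 = h"
      and half_sum: "(real (Suc j) * pi / real n + real j * pi / real n) / 2 = t * pi / 2"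
      using n_pos by (simp_all add: h_def t_def field_simps)
    show ?thesis
      by (simp only: sin_diff_sin half_diff half_sum)
  qed
  have sin_step: "sin (pi / real n) = 2 * sin h * cos h"
    using sin_double[of h] by (simp add: h_def)
  have "0 \<le> t" "t \<le> 1"
    using assms n_pos by (auto simp: t_def field_simps)
  then have "real n - 2 * real j - 1 \<le> real n * cos (t * pi / 2)"
    using cos_ge_one_minus[of t] n_pos by (simp add: t_def field_simps)
  moreover have "(real n - 2 * real j - 1) * cos h < real n - 2 * real j - 1"
    using assms cos_h_lt_1 by simp
  ultimately have "2 * sin h * ((real n - 2 * real j - 1) * cos h)
                     < 2 * sin h * (real n * cos (t * pi / 2))"
    using sin_h_pos by simp
  then show ?thesis
    unfolding increment sin_step by (simp add: algebra_simps)
qed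

definition sin_ratio_excess :: "nat \<Rightarrow> nat \<Rightarrow> real" where
  "sin_ratio_excess n j =
     real n * sin (real j * pi / real n) - (real j * (real n - real j) + 1) * sin (pi / real n)"

lemma sin_ratio_excess_one: "sin_ratio_excess n 1 = 0"
  by (simp add: sin_ratio_excess_def algebra_simps)

lemma sin_ratio_excess_Suc_gt:
  assumes "2 * j + 1 < n"
  shows "sin_ratio_excess n j < sin_ratio_excess n (Suc j)"
  using sin_multiple_increment_gt[OF assms] by (simp add: sin_ratio_excess_def algebra_simps)

lemma sin_ratio_excess_pos:
  assumes "2 \<le> k" "2 * k \<le> n"
  shows "sin_ratio_excess n k > 0"
  using assms
proof (induction k rule: nat_induct_at_least)
  case base
  then have "sin_ratio_excess n 1 < sin_ratio_excess n (Suc 1)"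
    by (intro sin_ratio_excess_Suc_gt) simp
  then show ?case
    by (simp only: sin_ratio_excess_one Suc_1)
next
  case (Suc k)
  then show ?case
    using sin_ratio_excess_Suc_gt[of k n] by simp
qed

theorem proposition5p2:
  fixes n k :: nat
  assumes "n \<ge> 4" and "2 \<le> k" and "k \<le> n div 2"
  shows "real n * sin (pi * real k / real n) / sin (pi / real n) > real (k * (n - k)) + 1"
proof -
  have "2 * k \<le> n" and "k \<le> n"
    using assms by linarith+
  then have "(real k * (real n - real k) + 1) * sin (pi / real n) < real n * sin (pi * real k / real n)"
    using sin_ratio_excess_pos[OF assms(2)] by (simp add: sin_ratio_excess_def mult.commute)
  moreover have "sin (pi / real n) > 0"
    using assms(1) by (intro sin_gt_zero) (auto simp: field_simps)
  ultimately show ?thesis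
    using \<open>k \<le> n\<close> by (simp add: pos_less_divide_eq of_nat_diff)
qed

end
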